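(* Let $w(\tau):=\left(e^{-3\tau}-\dfrac{4e^{-6\tau}}{(e^{-\tau}+1)^3}\right)1_{(0,\infty)}(\tau)$ for $\tau\in\mathbb{R}$. Then the Fourier transform $\hat w(\xi)=\int_{\mathbb{R}}w(\tau)e^{-i\xi\tau}\,d\tau$ has no zeroes on $\mathbb{R}$. *)

theory Defs
  imports "HOL-Analysis.Analysis"
begin

definition w :: "real \<Rightarrow> real" where
  "w \<tau> = (if \<tau> \<in> {0<..} then exp (-3*\<tau>) - 4 * exp (-6*\<tau>) / (exp (-\<tau>) + 1)^3 else 0)"

definition fourier_transform :: "(real \<Rightarrow> real) \<Rightarrow> real \<Rightarrow> complex" where
  "fourier_transform f \<xi> = (\<integral>\<tau>. complex_of_real (f \<tau>) * exp (- \<i> * complex_of_real (\<xi> * \<tau>)) \<partial>lborel)"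

end

theory Submission
  imports Defs
begin

(* On (0, oo) the function w is g(t) = q(exp (- t)) with q(x) = x^3 - 4 x^6 / (x + 1)^3; the
   function g is defined and smooth on all of R, positive and strictly decreasing on (0, oo), and
   g and g' decay like exp (- t). For xi = 0 the transform is the integral of g, which is positive.
   For xi <> 0, integrating by parts against exp (- i xi t) - 1, which vanishes at t = 0, gives
   - i xi w^(xi) = integral of g'(t) (1 - exp (- i xi t)) over (0, oo), and the real part
   g'(t) (1 - cos (xi t)) of this integrand is nonpositive, and negative at t = pi / |xi|. *)

lemma tendsto_exp_neg_at_top: "((\<lambda>t::real. exp (- t)) \<longlongrightarrow> 0) at_top"
  using exp_at_bot filterlim_compose filterlim_uminus_at_bot_at_top by blast

lemma set_integrable_exp_neg: "set_integrable lborel {0<..} (\<lambda>x::real. exp (- x))"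
proof -
  have "set_integrable lborel (einterval 0 \<infinity>) (\<lambda>x::real. exp (- x))"
  proof (rule interval_integral_FTC_nonneg(1)[where F="\<lambda>x. - exp (- x)" and A="-1" and B=0])
    show "(((\<lambda>x. - exp (- x)) \<circ> real_of_ereal) \<longlongrightarrow> -1) (at_right 0)"
      by (auto simp: zero_ereal_def ereal_tendsto_simps intro!: tendsto_eq_intros)
    show "(((\<lambda>x. - exp (- x)) \<circ> real_of_ereal) \<longlongrightarrow> 0) (at_left \<infinity>)"
      using tendsto_minus[OF tendsto_exp_neg_at_top] by (simp add: ereal_tendsto_simps)
  qed (auto intro!: derivative_eq_intros)
  then show ?thesis
    by (simp add: interval_lebesgue_integral_0_infty(1)[symmetric] interval_lebesgue_integrable_def)
qed

lemma set_integrable_exp_neg_bound: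
  fixes f :: "real \<Rightarrow> 'a::{banach, second_countable_topology}"
  assumes "continuous_on {0<..} f" and "\<And>t. t > 0 \<Longrightarrow> norm (f t) \<le> C * exp (- t)"
  shows "set_integrable lborel {0<..} f"
proof (rule set_integrable_bound)
  show "set_integrable lborel {0<..} (\<lambda>t. C * exp (- t))"
    using set_integrable_exp_neg by simp
  show "set_borel_measurable lborel {0<..} f"
    using set_measurable_continuous_on[OF _ assms(1)] unfolding set_borel_measurable_def by simp
  show "AE t in lborel. t \<in> {0<..} \<longrightarrow> norm (f t) \<le> norm (C * exp (- t))"
    using assms(2) by (auto intro!: AE_I2 order_trans[OF _ abs_ge_self])
qed

lemma set_integrable_scaleR_bounded:
  fixes f :: "real \<Rightarrow> real" and u :: "real \<Rightarrow> 'a::{banach, second_countable_topology}"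
  assumes f: "set_integrable lborel A f" and u: "u \<in> borel_measurable borel"
    and bounded: "\<And>t. norm (u t) \<le> B"
  shows "set_integrable lborel A (\<lambda>t. f t *\<^sub>R u t)"
proof (rule set_integrable_bound)
  show "set_integrable lborel A (\<lambda>t. B * f t)"
    using f by simp
  have "(\<lambda>t. indicator A t *\<^sub>R f t) \<in> borel_measurable lborel"
    using f unfolding set_integrable_def by blast
  then show "set_borel_measurable lborel A (\<lambda>t. f t *\<^sub>R u t)"
    using u unfolding set_borel_measurable_def by (simp add: measurable_lborel1)
  have "0 \<le> B"
    using norm_ge_zero order_trans bounded by blast
  then show "AE t in lborel. t \<in> A \<longrightarrow> norm (f t *\<^sub>R u t) \<le> norm (B * f t)"
    by (intro AE_I2) (auto simp: abs_mult mult.commute[of B] intro!: mult_left_mono bounded)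
qed

lemma set_integral_pos_continuous:
  fixes h :: "real \<Rightarrow> real"
  assumes "open A" and cont: "continuous_on A h" and nonneg: "\<And>t. t \<in> A \<Longrightarrow> h t \<ge> 0"
    and int: "set_integrable lborel A h" and "x \<in> A" "h x > 0"
  shows "(LINT t:A|lborel. h t) > 0"
proof -
  obtain e where "e > 0" and "cball x e \<subseteq> A"
    using \<open>open A\<close> \<open>x \<in> A\<close> open_contains_cball by blast
  define C where "C = {x - e .. x + e}"
  have "C \<subseteq> A" "x \<in> C"
    using \<open>e > 0\<close> \<open>cball x e \<subseteq> A\<close> by (auto simp: C_def cball_eq_atLeastAtMost)
  have hA: "h integrable_on A" "(LINT t:A|lborel. h t) = integral A h"
    using set_borel_integral_eq_integral[OF int] by auto
  have contC: "continuous_on C h"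
    using cont \<open>C \<subseteq> A\<close> continuous_on_subset by blast
  then have hC: "h integrable_on C"
    unfolding C_def using integrable_continuous_real by blast
  have "integral C h \<noteq> 0"
  proof
    assume "integral C h = 0"
    then have "h x = 0"
      using contC nonneg \<open>C \<subseteq> A\<close> \<open>x \<in> C\<close> \<open>e > 0\<close> integrable_integral[OF hC]
      by (intro has_integral_0_cbox_imp_0[where f = h and a = "x - e" and b = "x + e"])
        (auto simp: C_def subset_iff)
    then show False
      using \<open>h x > 0\<close> by simp
  qed
  moreover have "0 \<le> integral C h"
    using hC nonneg \<open>C \<subseteq> A\<close> by (intro integral_nonneg) auto
  moreover have "integral C h \<le> integral A h"
    using hC hA(1) nonneg \<open>C \<subseteq> A\<close> by (intro integral_subset_le) auto
  ultimately show ?thesis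
    using hA(2) by linarith
qed

lemma has_vector_derivative_exp_imaginary:
  "((\<lambda>t. exp (- \<i> * complex_of_real (\<xi> * t))) has_vector_derivative
      - \<i> * complex_of_real \<xi> * exp (- \<i> * complex_of_real (\<xi> * t))) (at t)"
proof -
  have "((\<lambda>z. exp (- \<i> * complex_of_real \<xi> * z)) has_field_derivative
      - \<i> * complex_of_real \<xi> * exp (- \<i> * complex_of_real (\<xi> * t))) (at (complex_of_real t))"
    by (auto intro!: derivative_eq_intros simp: mult.assoc)
  from has_vector_derivative_real_field[OF this, of UNIV] show ?thesis
    by (simp add: mult.assoc)
qed

locale decreasing_profile =
  fixes g g' :: "real \<Rightarrow> real"
  assumes has_deriv: "\<And>t. (g has_real_derivative g' t) (at t)"
    and deriv_cont: "\<And>t. isCont g' t"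
    and deriv_neg: "\<And>t. t > 0 \<Longrightarrow> g' t < 0"
    and integrable: "set_integrable lborel {0<..} g"
    and deriv_integrable: "set_integrable lborel {0<..} g'"
    and tendsto_zero: "(g \<longlongrightarrow> 0) at_top"
begin

lemma pos:
  assumes "t > 0"
  shows "g t > 0"
proof (rule DERIV_neg_imp_decreasing_at_top[OF _ tendsto_zero])
  fix s
  assume "t \<le> s"
  then show "\<exists>y. DERIV g s :> y \<and> y < 0"
    using assms has_deriv deriv_neg by force
qed

lemma cont: "isCont g t"
  using has_deriv DERIV_isCont by blast

lemma integral_pos: "(LINT t:{0<..}|lborel. g t) > 0"
  using integrable pos
  by (intro set_integral_pos_continuous[where x = 1])
    (auto intro: less_imp_le continuous_at_imp_continuous_on cont)

lemma set_integrable_mult_exp: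
  "set_integrable lborel {0<..}
     (\<lambda>t. complex_of_real (g t) * exp (- \<i> * complex_of_real (\<xi> * t)))"
  "set_integrable lborel {0<..}
     (\<lambda>t. complex_of_real (g' t) * (1 - exp (- \<i> * complex_of_real (\<xi> * t))))"
proof -
  have "(\<lambda>t. exp (- \<i> * complex_of_real (\<xi> * t))) \<in> borel_measurable borel"
    by (intro borel_measurable_continuous_onI continuous_intros)
  from set_integrable_scaleR_bounded[OF integrable this, of 1] show
    "set_integrable lborel {0<..}
       (\<lambda>t. complex_of_real (g t) * exp (- \<i> * complex_of_real (\<xi> * t)))"
    by (simp add: scaleR_conv_of_real)
  have meas: "(\<lambda>t. 1 - exp (- \<i> * complex_of_real (\<xi> * t))) \<in> borel_measurable borel"
    by (intro borel_measurable_continuous_onI continuous_intros)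
  have bound: "norm (1 - exp (- \<i> * complex_of_real (\<xi> * t))) \<le> 2" for t
    using norm_triangle_ineq4[of 1 "exp (- \<i> * complex_of_real (\<xi> * t))"] by simp
  from set_integrable_scaleR_bounded[OF deriv_integrable meas bound] show
    "set_integrable lborel {0<..}
       (\<lambda>t. complex_of_real (g' t) * (1 - exp (- \<i> * complex_of_real (\<xi> * t))))"
    by (simp add: scaleR_conv_of_real)
qed

lemma boundary_term_tendsto_zero:
  "((\<lambda>t. complex_of_real (g t) * (1 - exp (- \<i> * complex_of_real (\<xi> * t)))) \<longlongrightarrow> 0) (at_right 0)"
  "((\<lambda>t. complex_of_real (g t) * (1 - exp (- \<i> * complex_of_real (\<xi> * t)))) \<longlongrightarrow> 0) at_top"
proof -
  let ?F = "\<lambda>t. complex_of_real (g t) * (1 - exp (- \<i> * complex_of_real (\<xi> * t)))"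
  have "isCont ?F 0"
    by (intro continuous_intros cont)
  then show "(?F \<longlongrightarrow> 0) (at_right 0)"
    by (simp add: isCont_def filterlim_at_split)
  show "(?F \<longlongrightarrow> 0) at_top"
  proof (rule Lim_null_comparison)
    have "norm (1 - exp (- \<i> * complex_of_real (\<xi> * t))) \<le> 2" for t
      using norm_triangle_ineq4[of 1 "exp (- \<i> * complex_of_real (\<xi> * t))"] by simp
    then show "\<forall>\<^sub>F t in at_top. norm (?F t) \<le> 2 * \<bar>g t\<bar>"
      by (intro always_eventually allI) (simp add: norm_mult mult.commute[of 2] mult_left_mono)
    show "((\<lambda>t. 2 * \<bar>g t\<bar>) \<longlongrightarrow> 0) at_top"
      using tendsto_mult_right_zero[OF tendsto_rabs_zero[OF tendsto_zero]] by simp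
  qed
qed

lemma fourier_integration_by_parts:
  "(- \<i> * complex_of_real \<xi>) *
      (LINT t:{0<..}|lborel. complex_of_real (g t) * exp (- \<i> * complex_of_real (\<xi> * t)))
    = (LINT t:{0<..}|lborel. complex_of_real (g' t) * (1 - exp (- \<i> * complex_of_real (\<xi> * t))))"
proof -
  define c where "c = - \<i> * complex_of_real \<xi>"
  define E where "E t = exp (- \<i> * complex_of_real (\<xi> * t))" for t
  define F where "F t = complex_of_real (g t) * (1 - E t)" for t
  define f where "f t = complex_of_real (g' t) * (1 - E t) - c * (complex_of_real (g t) * E t)" for t
  have int_gE: "set_integrable lborel {0<..} (\<lambda>t. complex_of_real (g t) * E t)"
    and int_g'E: "set_integrable lborel {0<..} (\<lambda>t. complex_of_real (g' t) * (1 - E t))"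
    unfolding E_def by (rule set_integrable_mult_exp)+
  have "(LBINT t=0..\<infinity>. f t) = 0 - 0"
  proof (rule interval_integral_FTC_integrable[where F = F])
    show "(F has_vector_derivative f t) (at t)" for t
      using has_vector_derivative_mult[OF has_vector_derivative_of_real[OF has_deriv[of t]]
          has_vector_derivative_diff[OF has_vector_derivative_const[of 1]
            has_vector_derivative_exp_imaginary[of \<xi> t]]]
      by (simp add: F_def[abs_def] f_def E_def c_def algebra_simps)
    show "isCont f t" for t
      unfolding f_def E_def by (intro continuous_intros deriv_cont cont)
    show "set_integrable lborel (einterval 0 \<infinity>) f"
      using int_g'E int_gE unfolding f_def
      by (simp add: set_integral_diff einterval_def zero_ereal_def greaterThan_def)
    show "((F \<circ> real_of_ereal) \<longlongrightarrow> 0) (at_right 0)"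
      using boundary_term_tendsto_zero(1)
      by (simp add: F_def[abs_def] E_def zero_ereal_def ereal_tendsto_simps)
    show "((F \<circ> real_of_ereal) \<longlongrightarrow> 0) (at_left \<infinity>)"
      using boundary_term_tendsto_zero(2)
      by (simp add: F_def[abs_def] E_def ereal_tendsto_simps)
  qed auto
  then have "(LINT t:{0<..}|lborel. f t) = 0"
    by (simp add: interval_lebesgue_integral_0_infty(2))
  then have "(LINT t:{0<..}|lborel. complex_of_real (g' t) * (1 - E t))
      - c * (LINT t:{0<..}|lborel. complex_of_real (g t) * E t) = 0"
    using int_g'E int_gE unfolding f_def by (simp add: set_integral_diff set_integral_mult_right)
  then have "c * (LINT t:{0<..}|lborel. complex_of_real (g t) * E t)
      = (LINT t:{0<..}|lborel. complex_of_real (g' t) * (1 - E t))"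
    by simp
  then show ?thesis
    by (simp only: c_def E_def)
qed

lemma integral_deriv_mult_one_minus_cos_neg:
  assumes "\<xi> \<noteq> 0"
  shows "(LINT t:{0<..}|lborel. g' t * (1 - cos (\<xi> * t))) < 0"
proof -
  define h where "h t = g' t * (1 - cos (\<xi> * t))" for t
  have int_h: "set_integrable lborel {0<..} h"
  proof -
    have "(\<lambda>t. 1 - cos (\<xi> * t)) \<in> borel_measurable borel"
      by (intro borel_measurable_continuous_onI continuous_intros)
    moreover have "norm (1 - cos (\<xi> * t)) \<le> 2" for t
      using cos_ge_minus_one[of "\<xi> * t"] cos_le_one[of "\<xi> * t"] by simp
    ultimately show ?thesis
      unfolding h_def using set_integrable_scaleR_bounded[OF deriv_integrable] by fastforce
  qed
  have "(LINT t:{0<..}|lborel. - h t) > 0"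
  proof (rule set_integral_pos_continuous[where x = "pi / \<bar>\<xi>\<bar>"])
    show "continuous_on {0<..} (\<lambda>t. - h t)"
      unfolding h_def by (intro continuous_at_imp_continuous_on ballI continuous_intros deriv_cont)
    show "- h t \<ge> 0" if "t \<in> {0<..}" for t
      using deriv_neg[of t] cos_le_one[of "\<xi> * t"] that
      unfolding h_def by (simp add: mult_nonpos_nonneg)
    have "cos (\<xi> * (pi / \<bar>\<xi>\<bar>)) = -1"
      using assms by (cases "\<xi> > 0") auto
    then show "- h (pi / \<bar>\<xi>\<bar>) > 0"
      using deriv_neg[of "pi / \<bar>\<xi>\<bar>"] assms unfolding h_def by simp
  qed (use set_integrable_mult_right[OF int_h, of "-1"] assms in auto)
  then show ?thesis
    using set_integral_uminus[OF int_h] unfolding h_def by simp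
qed

lemma Re_integral_deriv_mult_one_minus_exp:
  "Re (LINT t:{0<..}|lborel. complex_of_real (g' t) * (1 - exp (- \<i> * complex_of_real (\<xi> * t))))
    = (LINT t:{0<..}|lborel. g' t * (1 - cos (\<xi> * t)))"
proof -
  have "Re (LINT t:{0<..}|lborel. complex_of_real (g' t) * (1 - exp (- \<i> * complex_of_real (\<xi> * t))))
      = (LINT t:{0<..}|lborel. Re (complex_of_real (g' t) * (1 - exp (- \<i> * complex_of_real (\<xi> * t)))))"
    using integral_Re[OF set_integrable_mult_exp(2)[of \<xi>, unfolded set_integrable_def]]
    unfolding set_lebesgue_integral_def by simp
  also have "\<dots> = (LINT t:{0<..}|lborel. g' t * (1 - cos (\<xi> * t)))"
    by (rule set_lebesgue_integral_cong) (auto simp: Re_exp)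
  finally show ?thesis .
qed

lemma fourier_integral_nonzero:
  "(LINT t:{0<..}|lborel. complex_of_real (g t) * exp (- \<i> * complex_of_real (\<xi> * t))) \<noteq> 0"
proof (cases "\<xi> = 0")
  case True
  then show ?thesis
    using integral_pos by (simp add: set_integral_complex_of_real)
next
  case False
  then have "Re (LINT t:{0<..}|lborel.
      complex_of_real (g' t) * (1 - exp (- \<i> * complex_of_real (\<xi> * t)))) < 0"
    using integral_deriv_mult_one_minus_cos_neg Re_integral_deriv_mult_one_minus_exp by simp
  then show ?thesis
    using fourier_integration_by_parts[of \<xi>] by auto
qed

end

definition w_of_exp :: "real \<Rightarrow> real" where
  "w_of_exp x = x^3 - 4 * x^6 / (x + 1)^3"

definition w_of_exp_deriv :: "real \<Rightarrow> real" where
  "w_of_exp_deriv x = 3 * x^2 - 24 * x^5 / (x + 1)^3 + 12 * x^6 / (x + 1)^4"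

lemma has_real_derivative_w_of_exp:
  assumes "x > -1"
  shows "(w_of_exp has_real_derivative w_of_exp_deriv x) (at x)"
proof -
  have "(w_of_exp has_real_derivative
      3 * x^2 - (24 * x^5 * (x + 1)^3 - 4 * x^6 * (3 * (x + 1)^2)) / ((x + 1)^3)^2) (at x)"
    unfolding w_of_exp_def using assms
    by (auto intro!: derivative_eq_intros simp: power2_eq_square)
  moreover have "3 * x^2 - (24 * x^5 * (x + 1)^3 - 4 * x^6 * (3 * (x + 1)^2)) / ((x + 1)^3)^2
      = w_of_exp_deriv x"
    using assms unfolding w_of_exp_deriv_def by (simp add: field_simps)
  ultimately show ?thesis
    by simp
qed

lemma w_of_exp_deriv_pos:
  assumes "0 < x" "x < 1"
  shows "w_of_exp_deriv x > 0"
proof -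
  have "x^3 < x" "x^4 < x^2" "0 < x^2"
    using power_strict_decreasing[of 1 3 x] power_strict_decreasing[of 2 4 x] assms by simp_all
  moreover have "3 * (x + 1)^4 - 24 * x^3 * (x + 1) + 12 * x^4 = 3 + 12*x + 18*x^2 - 12*x^3 - 9*x^4"
    by (simp add: algebra_simps power_eq_if)
  ultimately have numerator_pos: "3 * (x + 1)^4 - 24 * x^3 * (x + 1) + 12 * x^4 > 0"
    using assms by linarith
  have "w_of_exp_deriv x = x^2 * (3 * (x + 1)^4 - 24 * x^3 * (x + 1) + 12 * x^4) / (x + 1)^4"
    using assms unfolding w_of_exp_deriv_def
    by (simp add: field_simps) (simp add: algebra_simps power_eq_if)
  then show ?thesis
    using numerator_pos assms by simp
qed

lemma abs_w_of_exp_le: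
  assumes "0 < x" "x \<le> 1"
  shows "\<bar>w_of_exp x\<bar> \<le> 5 * x"
proof -
  have "1 \<le> (x + 1)^3"
    using assms by simp
  then have "x^6 / (x + 1)^3 \<le> x^6"
    using assms by (simp add: divide_le_eq)
  moreover have "0 \<le> x^6 / (x + 1)^3" "0 \<le> x^3" "x^3 \<le> x" "x^6 \<le> x"
    using power_decreasing[of 1 3 x] power_decreasing[of 1 6 x] assms by simp_all
  ultimately show ?thesis
    unfolding w_of_exp_def by linarith
qed

lemma abs_w_of_exp_deriv_le:
  assumes "0 < x" "x \<le> 1"
  shows "\<bar>w_of_exp_deriv x\<bar> \<le> 39"
proof -
  have "1 \<le> (x + 1)^3" "1 \<le> (x + 1)^4"
    using assms by simp_all
  then have "x^5 / (x + 1)^3 \<le> x^5" "x^6 / (x + 1)^4 \<le> x^6"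
    using assms by (simp_all add: divide_le_eq)
  moreover have "0 \<le> x^5 / (x + 1)^3" "0 \<le> x^6 / (x + 1)^4"
    using assms by simp_all
  moreover have "x^6 \<le> 1" "x^5 \<le> 1" "x^2 \<le> 1" "0 \<le> x^2"
    using assms by (simp_all add: power_le_one)
  ultimately show ?thesis
    unfolding w_of_exp_deriv_def by linarith
qed

definition w_smooth :: "real \<Rightarrow> real" where
  "w_smooth t = w_of_exp (exp (- t))"

definition w_smooth_deriv :: "real \<Rightarrow> real" where
  "w_smooth_deriv t = - exp (- t) * w_of_exp_deriv (exp (- t))"

lemma w_eq_w_smooth:
  assumes "t > 0"
  shows "w t = w_smooth t"
proof -
  have "exp (- (real k * t)) = exp (- t) ^ k" for k
    by (metis exp_of_nat_mult mult_minus_right)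
  from this[of 3] this[of 6] have "exp (-3*t) = exp (- t)^3" "exp (-6*t) = exp (- t)^6"
    by simp_all
  then show ?thesis
    using assms unfolding w_def w_smooth_def w_of_exp_def by (simp add: add.commute)
qed

lemma has_real_derivative_w_smooth: "(w_smooth has_real_derivative w_smooth_deriv t) (at t)"
proof -
  have "((\<lambda>t. w_of_exp (exp (- t))) has_real_derivative
      w_of_exp_deriv (exp (- t)) * (exp (- t) * -1)) (at t)"
    by (rule DERIV_chain2[OF has_real_derivative_w_of_exp])
      (auto intro!: derivative_eq_intros simp: less_trans[OF _ exp_gt_zero])
  then show ?thesis
    unfolding w_smooth_def[abs_def] w_smooth_deriv_def by (simp add: mult.commute)
qed

lemma isCont_w_smooth_deriv: "isCont w_smooth_deriv t"
proof -
  have "exp (- t) + 1 \<noteq> 0"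
    using exp_gt_zero[of "- t"] by linarith
  then show ?thesis
    unfolding w_smooth_deriv_def[abs_def] w_of_exp_deriv_def by (auto intro!: continuous_intros)
qed

lemma decreasing_profile_w_smooth: "decreasing_profile w_smooth w_smooth_deriv"
proof
  show "(w_smooth has_real_derivative w_smooth_deriv t) (at t)" for t
    by (rule has_real_derivative_w_smooth)
  show "isCont w_smooth_deriv t" for t
    by (rule isCont_w_smooth_deriv)
  show "w_smooth_deriv t < 0" if "t > 0" for t
    using w_of_exp_deriv_pos[of "exp (- t)"] that unfolding w_smooth_deriv_def by simp
  show "set_integrable lborel {0<..} w_smooth"
  proof (rule set_integrable_exp_neg_bound)
    show "continuous_on {0<..} w_smooth"
      using has_real_derivative_w_smooth
      by (intro continuous_at_imp_continuous_on ballI DERIV_isCont)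
    show "norm (w_smooth t) \<le> 5 * exp (- t)" if "t > 0" for t
      using abs_w_of_exp_le[of "exp (- t)"] that unfolding w_smooth_def by simp
  qed
  show "set_integrable lborel {0<..} w_smooth_deriv"
  proof (rule set_integrable_exp_neg_bound)
    show "continuous_on {0<..} w_smooth_deriv"
      using isCont_w_smooth_deriv by (intro continuous_at_imp_continuous_on ballI)
    show "norm (w_smooth_deriv t) \<le> 39 * exp (- t)" if "t > 0" for t
      using abs_w_of_exp_deriv_le[of "exp (- t)"] that
      unfolding w_smooth_deriv_def by (simp add: abs_mult)
  qed
  have "isCont w_of_exp 0"
    using has_real_derivative_w_of_exp[of 0] DERIV_isCont by simp
  from isCont_tendsto_compose[OF this tendsto_exp_neg_at_top]
  show "(w_smooth \<longlongrightarrow> 0) at_top"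
    unfolding w_smooth_def[abs_def] w_of_exp_def by simp
qed

theorem proposition4p2:
  fixes \<xi> :: real
  shows "fourier_transform w \<xi> \<noteq> 0"
proof -
  have "complex_of_real (w t) * exp (- \<i> * complex_of_real (\<xi> * t))
      = indicator {0<..} t *\<^sub>R (complex_of_real (w_smooth t) * exp (- \<i> * complex_of_real (\<xi> * t)))"
    for t
    by (cases "t > 0") (simp add: w_eq_w_smooth, simp add: w_def)
  then have "fourier_transform w \<xi>
      = (LINT t:{0<..}|lborel. complex_of_real (w_smooth t) * exp (- \<i> * complex_of_real (\<xi> * t)))"
    unfolding fourier_transform_def set_lebesgue_integral_def by simp
  then show ?thesis
    using decreasing_profile.fourier_integral_nonzero[OF decreasing_profile_w_smooth] by simp
qed

end
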